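(* Let $P_0$ be a distribution of $(Y,\mathbf{X},\mathbf{Z})$ as in the context, with error density $g_0$ and expectation $E_0$. Define \[ I_{\mathrm{add}}=I_{g_0}\,E_0[\mathbf{X}-\boldsymbol\eta(\mathbf{Z})][\mathbf{X}-\boldsymbol\eta(\mathbf{Z})]^\top,\qquad I_{\mathrm{PL}}=I_{g_0}\,E_0[\mathbf{X}-E_0(\mathbf{X}\mid\mathbf{Z})][\mathbf{X}-E_0(\mathbf{X}\mid\mathbf{Z})]^\top . \] Suppose $I_{\mathrm{PL}}$ is positive definite. Then $I_{\mathrm{add}}^{-1}<I_{\mathrm{PL}}^{-1}$ unless \[ E_0[\boldsymbol\eta(\mathbf{Z})-E_0(\mathbf{X}\mid\mathbf{Z})][\boldsymbol\eta(\mathbf{Z})-E_0(\mathbf{X}\mid\mathbf{Z})]^\top=\mathbf{O}, \] where $\mathbf{O}$ is the $p\times p$ zero matrix. Here, for symmetric matrices, $A<B$ means that $B-A$ is non-negative definite and $A\neq B$.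
   Context: Data model: $(Y,\mathbf{X},\mathbf{Z})$ with $\mathbf{X}\in\mathbb{R}^p$ and $\mathbf{Z}\in\mathbb{R}^d$ satisfies $Y=\mathbf{X}^\top\boldsymbol\beta^0+m^0(\mathbf{Z})+\epsilon$. The error $\epsilon$ is independent of $(\mathbf{X},\mathbf{Z})$ and has a symmetric, absolutely continuous density $g_0$ with $I_{g_0}=\int (g_0')^2/g_0<\infty$. $(\mathbf{X},\mathbf{Z})$ has a joint density $q_0$ (with respect to a $\sigma$-finite measure times Lebesgue measure), and $\mathbf{Z}$ has compact support $[0,1]^d$. $\mathcal{H}(q_0)$ is the closed subspace of $L_2(q_0)$ of functions $m(\mathbf{z})=\sum_{j=1}^d m_j(z_j)$ with $E_0 m_j(Z_j)=0$ for all $j$. Set $\boldsymbol\eta=(\eta_1,\ldots,\eta_p)^\top$, where $\eta_j$ is the $L_2(q_0)$-projection of $\mathbf{z}\mapsto E_0(X_j\mid\mathbf{Z}=\mathbf{z})$ onto $\mathcal{H}(q_0)$. Interpretation: $I_{\mathrm{add}}$ is the semi-parametric information bound for $\boldsymbol\beta$ in the partially linear additive model, where $m^0$ is additive. $I_{\mathrm{PL}}$ is the bound in the partially linear model, where $m^0$ is an arbitrary function of $\mathbf{Z}$. *)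

theory Defs
  imports "HOL-Probability.Probability"
begin

definition cond_exp_XZ ::
  "'a measure \<Rightarrow> ('a \<Rightarrow> real^'d) \<Rightarrow> ('a \<Rightarrow> real^'p) \<Rightarrow> 'p \<Rightarrow> 'a \<Rightarrow> real" where
  "cond_exp_XZ M Z X j = real_cond_exp M (vimage_algebra (space M) Z borel) (\<lambda>\<omega>. X \<omega> $ j)"

definition additive_space ::
  "'a measure \<Rightarrow> ('a \<Rightarrow> real^'d) \<Rightarrow> (real^'d \<Rightarrow> real) set" where
  "additive_space M Z = {m. \<exists>mj :: 'd \<Rightarrow> real \<Rightarrow> real.
      (\<forall>z. m z = (\<Sum>j\<in>UNIV. mj j (z $ j))) \<and>
      (\<forall>j. mj j \<in> borel_measurable borel) \<and>
      (\<forall>j. integrable M (\<lambda>\<omega>. (mj j (Z \<omega> $ j))\<^sup>2)) \<and>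
      (\<forall>j. (\<integral>\<omega>. mj j (Z \<omega> $ j) \<partial>M) = 0)}"

definition is_L2_projection ::
  "'a measure \<Rightarrow> ('a \<Rightarrow> real^'d) \<Rightarrow> (real^'d \<Rightarrow> real) set \<Rightarrow> ('a \<Rightarrow> real) \<Rightarrow> (real^'d \<Rightarrow> real) \<Rightarrow> bool" where
  "is_L2_projection M Z H f g \<longleftrightarrow> g \<in> H \<and>
     (\<forall>h\<in>H. (\<integral>\<omega>. (f \<omega> - g (Z \<omega>)) * h (Z \<omega>) \<partial>M) = 0)"

definition fisher_info :: "(real \<Rightarrow> real) \<Rightarrow> (real \<Rightarrow> real) \<Rightarrow> real" where
  "fisher_info g g' = (\<integral>x. (g' x)\<^sup>2 / g x \<partial>lborel)"

definition second_moment :: "'a measure \<Rightarrow> ('a \<Rightarrow> real^'p) \<Rightarrow> real^'p^'p" where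
  "second_moment M U = (\<chi> i k. \<integral>\<omega>. U \<omega> $ i * U \<omega> $ k \<partial>M)"

definition pos_def_mat :: "real^'n^'n \<Rightarrow> bool" where
  "pos_def_mat A \<longleftrightarrow> transpose A = A \<and> (\<forall>v. v \<noteq> 0 \<longrightarrow> v \<bullet> (A *v v) > 0)"

definition nonneg_def_mat :: "real^'n^'n \<Rightarrow> bool" where
  "nonneg_def_mat A \<longleftrightarrow> transpose A = A \<and> (\<forall>v. v \<bullet> (A *v v) \<ge> 0)"

definition loewner_less :: "real^'n^'n \<Rightarrow> real^'n^'n \<Rightarrow> bool" where
  "loewner_less A B \<longleftrightarrow> nonneg_def_mat (B - A) \<and> A \<noteq> B"

end

theory Submission
  imports Defs
begin

text \<open>
  Write \<open>C = E(X | Z)\<close>, \<open>U = X - C\<close> and \<open>D = \<eta>(Z) - C\<close>. Since \<open>\<eta>(Z)\<close> is a square integrable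
  function of \<open>Z\<close>, \<open>D\<close> is orthogonal in \<open>L\<^sub>2\<close> to the residual \<open>U\<close> of the conditional expectation,
  so the second moment of \<open>X - \<eta>(Z) = U - D\<close> splits as \<open>E U U\<^sup>T + E D D\<^sup>T\<close>. Hence
  \<open>I\<^sub>a\<^sub>d\<^sub>d = I\<^sub>P\<^sub>L + I\<^sub>g\<^sub>0 E D D\<^sup>T\<close> with a non-zero non-negative definite perturbation, and matrix inversion
  is strictly antitone in the Loewner order on positive definite matrices.
\<close>

subsection \<open>Positive definite matrices\<close>

lemma matrix_inv_right:
  fixes A :: "'a::field^'n^'n"
  assumes "invertible A"
  shows "A ** matrix_inv A = mat 1"
  using someI_ex[OF assms[unfolded invertible_def]] unfolding matrix_inv_def by blast

lemma matrix_inv_left: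
  fixes A :: "'a::field^'n^'n"
  assumes "invertible A"
  shows "matrix_inv A ** A = mat 1"
  using someI_ex[OF assms[unfolded invertible_def]] unfolding matrix_inv_def by blast

lemma transpose_matrix_inv_symmetric:
  fixes A :: "'a::field^'n^'n"
  assumes "invertible A" and "transpose A = A"
  shows "transpose (matrix_inv A) = matrix_inv A"
proof -
  have "transpose (matrix_inv A) ** A = mat 1"
    using arg_cong[OF matrix_inv_right[OF assms(1)], of transpose] assms(2)
    by (simp add: matrix_transpose_mul)
  have "transpose (matrix_inv A) = transpose (matrix_inv A) ** (A ** matrix_inv A)"
    by (simp add: matrix_inv_right[OF assms(1)] matrix_mul_rid)
  also have "\<dots> = matrix_inv A"
    by (simp add: matrix_mul_assoc \<open>transpose (matrix_inv A) ** A = mat 1\<close> matrix_mul_lid)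
  finally show ?thesis .
qed

lemma pos_def_mat_imp_invertible:
  fixes A :: "real^'n^'n"
  assumes "pos_def_mat A"
  shows "invertible A"
proof -
  have "\<forall>x. A *v x = 0 \<longrightarrow> x = 0"
    using assms unfolding pos_def_mat_def by (metis inner_zero_right less_irrefl)
  then show ?thesis
    by (simp add: invertible_left_inverse matrix_left_invertible_ker)
qed

lemma pos_def_mat_add_nonneg_def:
  fixes A E :: "real^'n^'n"
  assumes "pos_def_mat A" and "nonneg_def_mat E"
  shows "pos_def_mat (A + E)"
  using assms unfolding pos_def_mat_def nonneg_def_mat_def
  by (auto simp: transpose_def vec_eq_iff matrix_vector_mult_add_rdistrib inner_add_right
           intro!: add_pos_nonneg)

lemma symmetric_matrix_inner_commute:
  fixes A :: "real^'n^'n"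
  assumes "transpose A = A"
  shows "v \<bullet> (A *v w) = (A *v v) \<bullet> w"
  by (metis assms dot_lmul_matrix transpose_matrix_vector)

text \<open>
  With \<open>a = A\<^sup>-\<^sup>1 v\<close> and \<open>b = (A + E)\<^sup>-\<^sup>1 v\<close>, expanding \<open>0 \<le> (b - a)\<^sup>T A (b - a)\<close> gives
  \<open>v\<^sup>T a \<ge> 2 v\<^sup>T b - b\<^sup>T A b\<close>, while \<open>v\<^sup>T b = b\<^sup>T A b + b\<^sup>T E b \<ge> b\<^sup>T A b\<close>.
\<close>
lemma matrix_inv_add_nonneg_def_quadratic_le:
  fixes A E :: "real^'n^'n"
  assumes A: "pos_def_mat A" and E: "nonneg_def_mat E"
  shows "v \<bullet> (matrix_inv (A + E) *v v) \<le> v \<bullet> (matrix_inv A *v v)"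
proof -
  define a where "a = matrix_inv A *v v"
  define b where "b = matrix_inv (A + E) *v v"
  have A_sym: "transpose A = A" using A pos_def_mat_def by blast
  have Aa: "A *v a = v"
    unfolding a_def using matrix_inv_right[OF pos_def_mat_imp_invertible[OF A]]
    by (simp add: matrix_vector_mul_assoc)
  have "(A + E) *v b = v"
    unfolding b_def
    using matrix_inv_right[OF pos_def_mat_imp_invertible[OF pos_def_mat_add_nonneg_def[OF A E]]]
    by (simp add: matrix_vector_mul_assoc)
  then have vb: "v \<bullet> b = b \<bullet> (A *v b) + b \<bullet> (E *v b)"
    by (auto simp: matrix_vector_mult_add_rdistrib inner_add_right inner_commute)
  have "0 \<le> (b - a) \<bullet> (A *v (b - a))"
    using A unfolding pos_def_mat_def by (cases "b = a") (auto intro: less_imp_le)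
  also have "\<dots> = b \<bullet> (A *v b) - 2 * (v \<bullet> b) + v \<bullet> a"
    using symmetric_matrix_inner_commute[OF A_sym, of a b] Aa
    by (simp add: matrix_vector_mult_diff_distrib inner_diff_left inner_diff_right inner_commute)
  finally have "v \<bullet> b \<le> v \<bullet> a"
    using vb E unfolding nonneg_def_mat_def by (smt (verit))
  then show ?thesis unfolding a_def b_def .
qed

lemma loewner_less_matrix_inv_add:
  fixes A E :: "real^'n^'n"
  assumes A: "pos_def_mat A" and E: "nonneg_def_mat E" and "E \<noteq> 0"
  shows "loewner_less (matrix_inv (A + E)) (matrix_inv A)"
proof -
  have A_inv: "invertible A" using pos_def_mat_imp_invertible[OF A] .
  have AE_inv: "invertible (A + E)"
    using pos_def_mat_imp_invertible[OF pos_def_mat_add_nonneg_def[OF A E]] .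
  have sym: "transpose A = A" "transpose (A + E) = A + E"
    using A E unfolding pos_def_mat_def nonneg_def_mat_def by (auto simp: transpose_def vec_eq_iff)
  have "matrix_inv (A + E) \<noteq> matrix_inv A"
  proof
    assume eq: "matrix_inv (A + E) = matrix_inv A"
    have "A + E = (A + E) ** (matrix_inv A ** A)"
      by (simp add: matrix_inv_left[OF A_inv] matrix_mul_rid)
    also have "\<dots> = A"
      by (simp add: eq[symmetric] matrix_mul_assoc matrix_inv_right[OF AE_inv] matrix_mul_lid)
    finally show False using \<open>E \<noteq> 0\<close> by simp
  qed
  moreover have "transpose (matrix_inv A - matrix_inv (A + E)) = matrix_inv A - matrix_inv (A + E)"
    using transpose_matrix_inv_symmetric[OF A_inv sym(1)]
      transpose_matrix_inv_symmetric[OF AE_inv sym(2)]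
    by (simp add: transpose_def vec_eq_iff)
  ultimately show ?thesis
    unfolding loewner_less_def nonneg_def_mat_def
    using matrix_inv_add_nonneg_def_quadratic_le[OF A E]
    by (simp add: matrix_vector_mult_diff_rdistrib inner_diff_right)
qed

lemma nonneg_def_mat_scaleR:
  fixes A :: "real^'n^'n"
  assumes "0 \<le> c" and "nonneg_def_mat A"
  shows "nonneg_def_mat (c *\<^sub>R A)"
  using assms unfolding nonneg_def_mat_def
  by (simp add: transpose_scalar scaleR_matrix_vector_assoc[symmetric])

lemma pos_def_mat_scaleR_imp_pos:
  fixes A :: "real^'n^'n"
  assumes "nonneg_def_mat A" and "pos_def_mat (c *\<^sub>R A)"
  shows "0 < c"
proof -
  have "0 < 1 \<bullet> ((c *\<^sub>R A) *v 1)"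
    using assms(2) unfolding pos_def_mat_def by (simp add: vec_eq_iff)
  then have "0 < c * (1 \<bullet> (A *v 1))"
    by (simp add: scaleR_matrix_vector_assoc[symmetric])
  moreover have "0 \<le> 1 \<bullet> (A *v 1)"
    using assms(1) unfolding nonneg_def_mat_def by blast
  ultimately show ?thesis
    by (metis mult_nonpos_nonneg not_le)
qed

subsection \<open>Square integrable random variables\<close>

definition square_integrable :: "'a measure \<Rightarrow> ('a \<Rightarrow> real) \<Rightarrow> bool" where
  "square_integrable M f \<longleftrightarrow> f \<in> borel_measurable M \<and> integrable M (\<lambda>x. (f x)\<^sup>2)"

lemma square_integrable_imp_integrable_mult:
  assumes "square_integrable M f" and "square_integrable M g"
  shows "integrable M (\<lambda>x. f x * g x)"
proof (rule Bochner_Integration.integrable_bound)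
  show "integrable M (\<lambda>x. (f x)\<^sup>2 + (g x)\<^sup>2)"
    using assms unfolding square_integrable_def by simp
  show "(\<lambda>x. f x * g x) \<in> borel_measurable M"
    using assms unfolding square_integrable_def by (simp add: borel_measurable_times)
  have "\<bar>f x * g x\<bar> \<le> (f x)\<^sup>2 + (g x)\<^sup>2" for x
  proof -
    have "2 * \<bar>f x\<bar> * \<bar>g x\<bar> \<le> (f x)\<^sup>2 + (g x)\<^sup>2"
      using sum_squares_bound[of "\<bar>f x\<bar>" "\<bar>g x\<bar>"] by (simp add: power2_abs)
    moreover have "0 \<le> \<bar>f x\<bar> * \<bar>g x\<bar>" by simp
    ultimately show ?thesis unfolding abs_mult by linarith
  qed
  then show "AE x in M. norm (f x * g x) \<le> norm ((f x)\<^sup>2 + (g x)\<^sup>2)"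
    by simp
qed

lemma square_integrable_add:
  assumes "square_integrable M f" and "square_integrable M g"
  shows "square_integrable M (\<lambda>x. f x + g x)"
proof -
  have "(\<lambda>x. (f x + g x)\<^sup>2) = (\<lambda>x. (f x)\<^sup>2 + (g x)\<^sup>2 + 2 * (f x * g x))"
    by (simp add: power2_sum mult.assoc)
  then show ?thesis
    using assms square_integrable_imp_integrable_mult[OF assms] unfolding square_integrable_def
    by (simp add: borel_measurable_add)
qed

lemma square_integrable_diff:
  assumes "square_integrable M f" and "square_integrable M g"
  shows "square_integrable M (\<lambda>x. f x - g x)"
  using square_integrable_add[OF assms(1), of "\<lambda>x. - g x"] assms(2)
  unfolding square_integrable_def by simp

lemma square_integrable_sum:
  assumes "\<And>i. i \<in> S \<Longrightarrow> square_integrable M (f i)"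
  shows "square_integrable M (\<lambda>x. \<Sum>i\<in>S. f i x)"
  using assms
proof (induction S rule: infinite_finite_induct)
  case (insert i S)
  then show ?case
    using square_integrable_add[of M "f i" "\<lambda>x. \<Sum>i\<in>S. f i x"] by simp
qed (simp_all add: square_integrable_def)

lemma borel_measurable_vec_nth [measurable]:
  fixes f :: "'a \<Rightarrow> 'b::topological_space^'n"
  assumes "f \<in> borel_measurable M"
  shows "(\<lambda>x. f x $ i) \<in> borel_measurable M"
proof -
  have "(\<lambda>v::'b^'n. v $ i) \<in> borel_measurable borel"
    by (intro borel_measurable_continuous_onI continuous_intros)
  then show ?thesis using measurable_compose[OF assms] by blast
qed

subsection \<open>Second moment matrices\<close>

lemma transpose_second_moment: "transpose (second_moment M U) = second_moment M U"
  by (simp add: transpose_def second_moment_def vec_eq_iff mult.commute)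

lemma second_moment_quadratic_form:
  fixes U :: "'a \<Rightarrow> real^'p"
  assumes "\<And>i. square_integrable M (\<lambda>\<omega>. U \<omega> $ i)"
  shows "v \<bullet> (second_moment M U *v v) = (\<integral>\<omega>. (v \<bullet> U \<omega>)\<^sup>2 \<partial>M)"
proof -
  have int: "integrable M (\<lambda>\<omega>. v $ i * (v $ k * (U \<omega> $ i * U \<omega> $ k)))" for i k
    using square_integrable_imp_integrable_mult[OF assms assms] by simp
  have "v \<bullet> (second_moment M U *v v)
      = (\<Sum>i\<in>UNIV. \<Sum>k\<in>UNIV. (\<integral>\<omega>. v $ i * (v $ k * (U \<omega> $ i * U \<omega> $ k)) \<partial>M))"
    by (simp add: inner_vec_def matrix_vector_mult_def second_moment_def sum_distrib_left
        mult.commute mult.left_commute)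
  also have "\<dots> = (\<integral>\<omega>. (\<Sum>i\<in>UNIV. \<Sum>k\<in>UNIV. v $ i * (v $ k * (U \<omega> $ i * U \<omega> $ k))) \<partial>M)"
    using int by simp
  also have "\<dots> = (\<integral>\<omega>. (v \<bullet> U \<omega>)\<^sup>2 \<partial>M)"
    by (simp add: inner_vec_def power2_eq_square sum_product mult.commute mult.left_commute)
  finally show ?thesis .
qed

lemma nonneg_def_second_moment:
  fixes U :: "'a \<Rightarrow> real^'p"
  assumes "\<And>i. square_integrable M (\<lambda>\<omega>. U \<omega> $ i)"
  shows "nonneg_def_mat (second_moment M U)"
  unfolding nonneg_def_mat_def
  by (simp add: transpose_second_moment second_moment_quadratic_form[OF assms])

lemma second_moment_diff_orthogonal:
  fixes U V :: "'a \<Rightarrow> real^'p"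
  assumes U: "\<And>i. square_integrable M (\<lambda>\<omega>. U \<omega> $ i)"
    and V: "\<And>i. square_integrable M (\<lambda>\<omega>. V \<omega> $ i)"
    and orthogonal: "\<And>i k. (\<integral>\<omega>. U \<omega> $ i * V \<omega> $ k \<partial>M) = 0"
  shows "second_moment M (\<lambda>\<omega>. U \<omega> - V \<omega>) = second_moment M U + second_moment M V"
proof -
  have "(\<integral>\<omega>. (U \<omega> $ i - V \<omega> $ i) * (U \<omega> $ k - V \<omega> $ k) \<partial>M)
      = (\<integral>\<omega>. U \<omega> $ i * U \<omega> $ k \<partial>M) + (\<integral>\<omega>. V \<omega> $ i * V \<omega> $ k \<partial>M)
        - (\<integral>\<omega>. U \<omega> $ i * V \<omega> $ k \<partial>M) - (\<integral>\<omega>. U \<omega> $ k * V \<omega> $ i \<partial>M)" for i k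
    using square_integrable_imp_integrable_mult[OF U U] square_integrable_imp_integrable_mult[OF V V]
      square_integrable_imp_integrable_mult[OF U V]
    by (simp add: algebra_simps)
  then show ?thesis
    by (simp add: second_moment_def vec_eq_iff orthogonal)
qed

subsection \<open>Conditional expectation as an orthogonal projection\<close>

lemma subalgebra_vimage_algebra:
  assumes "Z \<in> M \<rightarrow>\<^sub>M N"
  shows "subalgebra M (vimage_algebra (space M) Z N)"
  unfolding subalgebra_def
proof
  show "space (vimage_algebra (space M) Z N) = space M" by simp
  have "sets (vimage_algebra (space M) Z N) = {Z -` A \<inter> space M |A. A \<in> sets N}"
    using measurable_space[OF assms] by (intro sets_vimage_algebra2) blast
  then show "sets (vimage_algebra (space M) Z N) \<subseteq> sets M"
    using measurable_sets[OF assms] by auto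
qed

lemma finite_measure_subalgebra_vimage_algebra:
  assumes "finite_measure M" and "Z \<in> M \<rightarrow>\<^sub>M N"
  shows "finite_measure_subalgebra M (vimage_algebra (space M) Z N)"
  using assms subalgebra_vimage_algebra
  by (simp add: finite_measure_subalgebra_def finite_measure_subalgebra_axioms_def)

context finite_measure_subalgebra
begin

lemma square_integrable_real_cond_exp:
  assumes "square_integrable M f"
  shows "square_integrable M (real_cond_exp M F f)"
proof -
  have "integrable M (\<lambda>x. (real_cond_exp M F f x)\<^sup>2)"
    using assms unfolding square_integrable_def
    by (intro integrable_convex_cond_exp[where I = UNIV])
       (auto intro: square_integrable_imp_integrable convex_power2)
  then show ?thesis unfolding square_integrable_def by simp
qed

lemma real_cond_exp_residual_orthogonal:
  assumes f: "square_integrable M f" and g: "square_integrable M g"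
    and g_F: "g \<in> borel_measurable F"
  shows "(\<integral>x. (f x - real_cond_exp M F f x) * g x \<partial>M) = 0"
proof -
  have gf: "integrable M (\<lambda>x. g x * f x)"
    using square_integrable_imp_integrable_mult[OF g f] .
  have "(\<integral>x. g x * real_cond_exp M F f x \<partial>M) = (\<integral>x. g x * f x \<partial>M)"
    using f g_F gf unfolding square_integrable_def by (intro real_cond_exp_intg(2)) auto
  moreover have "integrable M (\<lambda>x. g x * real_cond_exp M F f x)"
    using square_integrable_imp_integrable_mult[OF g square_integrable_real_cond_exp[OF f]] .
  then have "(\<integral>x. (f x - real_cond_exp M F f x) * g x \<partial>M)
      = (\<integral>x. g x * f x \<partial>M) - (\<integral>x. g x * real_cond_exp M F f x \<partial>M)"
    using gf by (subst Bochner_Integration.integral_diff[symmetric]) (auto simp: algebra_simps)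
  ultimately show ?thesis by simp
qed

end

subsection \<open>Additive functions of the covariates\<close>

lemma additive_space_borel_measurable:
  fixes Z :: "'a \<Rightarrow> real^'d"
  assumes "m \<in> additive_space M Z"
  shows "m \<in> borel_measurable borel"
proof -
  obtain mj :: "'d \<Rightarrow> real \<Rightarrow> real" where
    "\<And>z. m z = (\<Sum>j\<in>UNIV. mj j (z $ j))" and [measurable]: "\<And>j. mj j \<in> borel_measurable borel"
    using assms unfolding additive_space_def by blast
  then have "m = (\<lambda>z. \<Sum>j\<in>UNIV. mj j (z $ j))" by auto
  then show ?thesis by simp
qed

lemma additive_space_square_integrable:
  fixes Z :: "'a \<Rightarrow> real^'d"
  assumes Z: "Z \<in> borel_measurable M" and "m \<in> additive_space M Z"
  shows "square_integrable M (\<lambda>\<omega>. m (Z \<omega>))"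
proof -
  obtain mj :: "'d \<Rightarrow> real \<Rightarrow> real" where m: "\<And>z. m z = (\<Sum>j\<in>UNIV. mj j (z $ j))"
    and [measurable]: "\<And>j. mj j \<in> borel_measurable borel"
    and L2: "\<And>j. integrable M (\<lambda>\<omega>. (mj j (Z \<omega> $ j))\<^sup>2)"
    using assms(2) unfolding additive_space_def by blast
  have "square_integrable M (\<lambda>\<omega>. mj j (Z \<omega> $ j))" for j
    using Z L2 unfolding square_integrable_def by simp
  then show ?thesis
    unfolding m by (rule square_integrable_sum)
qed

lemma square_integrable_cond_exp_XZ:
  assumes "finite_measure M" and "Z \<in> borel_measurable M" and "X \<in> borel_measurable M"
    and "integrable M (\<lambda>\<omega>. (X \<omega> $ j)\<^sup>2)"
  shows "square_integrable M (cond_exp_XZ M Z X j)"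
proof -
  interpret finite_measure_subalgebra M "vimage_algebra (space M) Z borel"
    using finite_measure_subalgebra_vimage_algebra assms(1,2) .
  show ?thesis
    unfolding cond_exp_XZ_def using assms(3,4)
    by (intro square_integrable_real_cond_exp) (simp add: square_integrable_def)
qed

lemma second_moment_additive_residual:
  fixes X :: "'a \<Rightarrow> real^'p" and Z :: "'a \<Rightarrow> real^'d"
  assumes M: "finite_measure M"
    and X: "X \<in> borel_measurable M" and Z: "Z \<in> borel_measurable M"
    and X_L2: "\<And>j. integrable M (\<lambda>\<omega>. (X \<omega> $ j)\<^sup>2)"
    and eta: "\<And>j. eta j \<in> additive_space M Z"
  shows "second_moment M (\<lambda>\<omega>. \<chi> j. X \<omega> $ j - eta j (Z \<omega>))
       = second_moment M (\<lambda>\<omega>. \<chi> j. X \<omega> $ j - cond_exp_XZ M Z X j \<omega>)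
       + second_moment M (\<lambda>\<omega>. \<chi> j. eta j (Z \<omega>) - cond_exp_XZ M Z X j \<omega>)"
proof -
  define F where "F = vimage_algebra (space M) Z borel"
  interpret finite_measure_subalgebra M F
    unfolding F_def using finite_measure_subalgebra_vimage_algebra M Z .
  have C: "cond_exp_XZ M Z X j = real_cond_exp M F (\<lambda>\<omega>. X \<omega> $ j)" for j
    unfolding cond_exp_XZ_def F_def ..
  have sq_X: "square_integrable M (\<lambda>\<omega>. X \<omega> $ j)" for j
    using X X_L2 unfolding square_integrable_def by simp
  have sq_C: "square_integrable M (cond_exp_XZ M Z X j)" for j
    using square_integrable_cond_exp_XZ M Z X X_L2 .
  have sq_eta: "square_integrable M (\<lambda>\<omega>. eta j (Z \<omega>))" for j
    using additive_space_square_integrable Z eta .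
  have "Z \<in> F \<rightarrow>\<^sub>M borel"
    unfolding F_def by (rule measurable_vimage_algebra1) simp
  then have eta_F: "(\<lambda>\<omega>. eta j (Z \<omega>)) \<in> borel_measurable F" for j
    using measurable_compose additive_space_borel_measurable[OF eta] by blast
  have "(\<integral>\<omega>. (X \<omega> $ i - cond_exp_XZ M Z X i \<omega>) * (eta k (Z \<omega>) - cond_exp_XZ M Z X k \<omega>) \<partial>M) = 0"
    for i k
    unfolding C
    by (intro real_cond_exp_residual_orthogonal square_integrable_diff sq_X sq_eta sq_C[unfolded C]
              borel_measurable_diff eta_F) simp
  moreover have "(\<lambda>\<omega>. \<chi> j. X \<omega> $ j - eta j (Z \<omega>))
      = (\<lambda>\<omega>. (\<chi> j. X \<omega> $ j - cond_exp_XZ M Z X j \<omega>) - (\<chi> j. eta j (Z \<omega>) - cond_exp_XZ M Z X j \<omega>))"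
    by (auto simp: vec_eq_iff)
  ultimately show ?thesis
    using sq_X sq_C sq_eta
    by (simp add: second_moment_diff_orthogonal square_integrable_diff)
qed

theorem theorem2:
  fixes M :: "'a measure"
    and Y :: "'a \<Rightarrow> real" and X :: "'a \<Rightarrow> real^'p" and Z :: "'a \<Rightarrow> real^'d"
    and eps :: "'a \<Rightarrow> real"
    and beta0 :: "real^'p" and m0 :: "real^'d \<Rightarrow> real"
    and g0 g0' :: "real \<Rightarrow> real"
    and eta :: "'p \<Rightarrow> real^'d \<Rightarrow> real"
  assumes prob: "prob_space M"
    and X_meas: "X \<in> borel_measurable M" and Z_meas: "Z \<in> borel_measurable M"
    and X_L2: "\<And>j. integrable M (\<lambda>\<omega>. (X \<omega> $ j)\<^sup>2)"
    and m0_meas: "m0 \<in> borel_measurable borel"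
    and model: "\<And>\<omega>. \<omega> \<in> space M \<Longrightarrow> Y \<omega> = X \<omega> \<bullet> beta0 + m0 (Z \<omega>) + eps \<omega>"
    and eps_dens: "distributed M lborel eps (\<lambda>x. ennreal (g0 x))"
    and eps_indep: "\<And>A B. A \<in> sets (borel :: real measure) \<Longrightarrow> B \<in> sets (borel :: ((real^'p) \<times> (real^'d)) measure) \<Longrightarrow>
         measure M {\<omega>\<in>space M. eps \<omega> \<in> A \<and> (X \<omega>, Z \<omega>) \<in> B}
           = measure M {\<omega>\<in>space M. eps \<omega> \<in> A} * measure M {\<omega>\<in>space M. (X \<omega>, Z \<omega>) \<in> B}"
    and g0_nonneg: "\<And>x. g0 x \<ge> 0"
    and g0_symm: "\<And>x. g0 (- x) = g0 x"
    and g0'_loc_int: "\<And>a b. set_integrable lborel {a..b} g0'"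
    and g0_abs_cont: "\<And>x. g0 x = g0 0 + (LBINT t=0..x. g0' t)"
    and fisher_finite: "integrable lborel (\<lambda>x. (g0' x)\<^sup>2 / g0 x)"
    and joint_dens: "\<exists>N q0. sigma_finite_measure N \<and> sets N = sets (borel :: (real^'p) measure) \<and>
                       distributed M (N \<Otimes>\<^sub>M lborel) (\<lambda>\<omega>. (X \<omega>, Z \<omega>)) q0"
    and Z_support: "\<And>\<omega>. \<omega> \<in> space M \<Longrightarrow> Z \<omega> \<in> cbox 0 1"
    and eta_proj: "\<And>j. is_L2_projection M Z (additive_space M Z) (cond_exp_XZ M Z X j) (eta j)"
    and PL_pd: "pos_def_mat (fisher_info g0 g0' *\<^sub>R
                  second_moment M (\<lambda>\<omega>. \<chi> j. X \<omega> $ j - cond_exp_XZ M Z X j \<omega>))"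
    and nonzero: "second_moment M (\<lambda>\<omega>. \<chi> j. eta j (Z \<omega>) - cond_exp_XZ M Z X j \<omega>) \<noteq> 0"
  shows "loewner_less
           (matrix_inv (fisher_info g0 g0' *\<^sub>R
               second_moment M (\<lambda>\<omega>. \<chi> j. X \<omega> $ j - eta j (Z \<omega>))))
           (matrix_inv (fisher_info g0 g0' *\<^sub>R
               second_moment M (\<lambda>\<omega>. \<chi> j. X \<omega> $ j - cond_exp_XZ M Z X j \<omega>)))"
proof -
  have M: "finite_measure M"
    using prob by (simp add: prob_space_def)
  have eta: "eta j \<in> additive_space M Z" for j
    using eta_proj unfolding is_L2_projection_def by blast
  define c where "c = fisher_info g0 g0'"
  define S_PL where "S_PL = second_moment M (\<lambda>\<omega>. \<chi> j. X \<omega> $ j - cond_exp_XZ M Z X j \<omega>)"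
  define S_D where "S_D = second_moment M (\<lambda>\<omega>. \<chi> j. eta j (Z \<omega>) - cond_exp_XZ M Z X j \<omega>)"
  have sq_X: "square_integrable M (\<lambda>\<omega>. X \<omega> $ j)" for j
    using X_meas X_L2 unfolding square_integrable_def by simp
  note sq_C = square_integrable_cond_exp_XZ[OF M Z_meas X_meas X_L2]
  note sq_eta = additive_space_square_integrable[OF Z_meas eta]
  have "nonneg_def_mat S_PL" "nonneg_def_mat S_D"
    unfolding S_PL_def S_D_def
    by (auto intro!: nonneg_def_second_moment square_integrable_diff sq_X sq_C sq_eta)
  moreover have "0 < c"
    using pos_def_mat_scaleR_imp_pos \<open>nonneg_def_mat S_PL\<close> PL_pd unfolding c_def S_PL_def by blast
  ultimately have "loewner_less (matrix_inv (c *\<^sub>R S_PL + c *\<^sub>R S_D)) (matrix_inv (c *\<^sub>R S_PL))"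
    using PL_pd nonzero unfolding c_def S_PL_def S_D_def
    by (intro loewner_less_matrix_inv_add nonneg_def_mat_scaleR) auto
  then show ?thesis
    using second_moment_additive_residual[OF M X_meas Z_meas X_L2 eta]
    unfolding c_def S_PL_def S_D_def by (simp add: scaleR_add_right)
qed

end
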